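(* Let $0.5208<\sigma_0<0.9723$, $10^3\le H<H_0$ with $H_0=3.061\cdot10^{10}$, and $T\ge H_0$. Then \[ \frac{2}{T-H}\int_H^T\sum_{1\le n<m<t}\frac{\cos(t\log(m/n))}{(nm)^{\sigma_0}}\,dt\le \epsilon_1(\sigma_0,H). \]
   Context: Here $H_0=3.061\cdot10^{10}$, $\zeta$ is the Riemann zeta function, and \[ \epsilon_1(\sigma_0,H)=\frac{4H_0}{H_0-H}\Big(\frac{(\log H_0)H_0^{1-2\sigma_0}}{2(1-\sigma_0)}-\frac{(2\sigma_0-1)\log H_0}{2(1-\sigma_0)H_0}+\frac{\max\big(0,\frac{1-3\sigma_0+3\sigma_0^2}{2(1-\sigma_0)^2}-\frac{\zeta(2\sigma_0)}{2}\big)}{H_0}+\frac{(2-\sigma_0)H_0^{1-2\sigma_0}}{2(1-\sigma_0)^2}-\frac{\sigma_0H_0^{-\sigma_0}}{(1-\sigma_0)^2}+\frac{H_0^{-2\sigma_0}}{2(2\sigma_0-1)}+\frac{H_0^{-2\sigma_0-1}}{2}\Big). \] The inner sum is over pairs of integers $(n,m)$ with $1\le n<m<t$. *)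

theory Defs
  imports "HOL-Analysis.Analysis"
begin

definition H0 :: real where
  "H0 = 3.061 * 10 ^ 10"

definition zeta_real :: "real \<Rightarrow> real" where
  "zeta_real s = (\<Sum>n. 1 / (real (Suc n)) powr s)"

definition eps1 :: "real \<Rightarrow> real \<Rightarrow> real" where
  "eps1 \<sigma> H = 4 * H0 / (H0 - H) *
     ( (ln H0) * H0 powr (1 - 2*\<sigma>) / (2 * (1 - \<sigma>))
     - (2*\<sigma> - 1) * ln H0 / (2 * (1 - \<sigma>) * H0)
     + max 0 ((1 - 3*\<sigma> + 3*\<sigma>^2) / (2 * (1 - \<sigma>)^2) - zeta_real (2*\<sigma>) / 2) / H0
     + (2 - \<sigma>) * H0 powr (1 - 2*\<sigma>) / (2 * (1 - \<sigma>)^2)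
     - \<sigma> * H0 powr (-\<sigma>) / (1 - \<sigma>)^2
     + H0 powr (-2*\<sigma>) / (2 * (2*\<sigma> - 1))
     + H0 powr (-2*\<sigma> - 1) / 2 )"

definition Ssum :: "real \<Rightarrow> real \<Rightarrow> real" where
  "Ssum \<sigma> t = (\<Sum>(n,m)\<in>{(n::nat, m::nat). 1 \<le> n \<and> n < m \<and> real m < t}.
      cos (t * ln (real m / real n)) / (real n * real m) powr \<sigma>)"

end

theory Submission
  imports Defs
begin

text \<open>
Integrated over t, the pair n < m contributes only for t > m, and the integral of cos (t log (m/n))
over an interval is at most 2 / log (m/n). As log (m/n) \<ge> (m - n)/m, the resulting weight
2 / (log (m/n) (n m)^\<sigma>) is at most 2 (n^(1-2\<sigma>) / (m - n) + (n m)^(-\<sigma>)). Harmonic-number and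
power-sum estimates bound the sum of the first parts; the sum of the second parts is half the square
of the sum of n^(-\<sigma>) minus its diagonal, and the diagonal is at least \<zeta>(2\<sigma>) minus an integral
bound for the tail. Altogether the integral is at most 2 T G(T), where G = eps1_profile \<sigma> and
eps1 \<sigma> H = 4 H0 / (H0 - H) G(H0). Since T / (T - H) \<le> H0 / (H0 - H), it remains that G decreases
once log T \<ge> 24.14 (and log H0 \<ge> 24.14). In the variable u = log T this reduces to the signs of
two derivatives, which are checked for 0.5208 < \<sigma> < 0.9723.
\<close>

section \<open>Sums of powers\<close>

lemma powr_succ_le_diff_quotient:
  fixes x r :: real
  assumes x: "0 < x" and r: "r < 1" "r \<noteq> 0"
  shows "(x + 1) powr (r - 1) \<le> ((x + 1) powr r - x powr r) / r"
proof -
  have "\<exists>z. x < z \<and> z < x + 1 \<and> (x + 1) powr r - x powr r = (x + 1 - x) * (r * z powr (r - 1))"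
    by (rule MVT2) (use x in \<open>auto intro!: has_real_derivative_powr\<close>)
  then obtain z where z: "x < z" "z < x + 1" "(x + 1) powr r - x powr r = r * z powr (r - 1)"
    by auto
  have "(x + 1) powr (r - 1) \<le> z powr (r - 1)"
    using r x z by (intro powr_mono2') auto
  also have "\<dots> = ((x + 1) powr r - x powr r) / r"
    using z r by simp
  finally show ?thesis .
qed

lemma sum_powr_neg_le:
  fixes q :: real
  assumes q: "0 < q" "q \<noteq> 1" and MN: "1 \<le> M" "M \<le> N"
  shows "(\<Sum>n=M..N. real n powr (-q))
    \<le> real M powr (-q) + (real N powr (1 - q) - real M powr (1 - q)) / (1 - q)"
  using MN(2)
proof (induction N rule: dec_induct)
  case base
  then show ?case by simp
next
  case (step N)
  have "(real N + 1) powr ((1 - q) - 1) \<le> ((real N + 1) powr (1 - q) - real N powr (1 - q)) / (1 - q)"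
    using step.hyps MN q by (intro powr_succ_le_diff_quotient) auto
  then have "real (Suc N) powr (-q) \<le> (real (Suc N) powr (1 - q) - real N powr (1 - q)) / (1 - q)"
    by (simp add: add.commute)
  with step.IH step.hyps show ?case
    by (simp add: diff_divide_distrib)
qed

lemma harm_le_one_plus_ln:
  assumes "1 \<le> n"
  shows "(harm n :: real) \<le> 1 + ln (real n)"
proof -
  have "harm (Suc (n - 1)) - ln (real (Suc (n - 1))) \<le> harm (Suc 0) - ln (real (Suc 0))"
    by (rule antimonoD[OF decseq_harm_diff_ln]) simp
  then show ?thesis
    using assms by (simp add: harm_def)
qed

lemma zeta_real_le:
  fixes p :: real
  assumes p: "1 < p" and M: "1 \<le> M"
  shows "zeta_real p \<le> (\<Sum>n=1..<M. real n powr (-p)) + real M powr (-p) + real M powr (1 - p) / (p - 1)"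
    (is "_ \<le> ?B")
proof -
  define f where "f n = real (Suc n) powr (-p)" for n
  have "summable (\<lambda>n. real n powr (-p))"
    using p by (subst summable_real_powr_iff) simp
  then have "summable f"
    unfolding f_def using summable_Suc_iff[of "\<lambda>n. real n powr (-p)"] by blast
  moreover have "(\<Sum>i<K. f i) \<le> ?B" for K
  proof -
    have partial: "(\<Sum>i<K. f i) = (\<Sum>n=1..K. real n powr (-p))"
      unfolding f_def by (rule sum.reindex_bij_witness[of _ "\<lambda>n. n - 1" Suc]) auto
    have tail: "(\<Sum>n=M..K. real n powr (-p)) \<le> real M powr (-p) + real M powr (1 - p) / (p - 1)"
    proof (cases "M \<le> K")
      case True
      have "(\<Sum>n=M..K. real n powr (-p))
          \<le> real M powr (-p) + (real K powr (1 - p) - real M powr (1 - p)) / (1 - p)"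
        using p M True by (intro sum_powr_neg_le) auto
      also have "\<dots> = real M powr (-p) + (real M powr (1 - p) - real K powr (1 - p)) / (p - 1)"
        using p by (simp add: field_simps)
      also have "\<dots> \<le> real M powr (-p) + real M powr (1 - p) / (p - 1)"
        using p by (simp add: divide_right_mono diff_divide_distrib)
      finally show ?thesis .
    qed (use p in simp)
    have "{1..K} \<subseteq> {1..<M} \<union> {M..K}" by auto
    then have "(\<Sum>n=1..K. real n powr (-p)) \<le> (\<Sum>n\<in>{1..<M} \<union> {M..K}. real n powr (-p))"
      by (intro sum_mono2) auto
    also have "\<dots> = (\<Sum>n=1..<M. real n powr (-p)) + (\<Sum>n=M..K. real n powr (-p))"
      by (intro sum.union_disjoint) auto
    finally show ?thesis
      using partial tail by linarith
  qed
  ultimately have "suminf f \<le> ?B"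
    by (intro suminf_le_const)
  moreover have "zeta_real p = suminf f"
    unfolding zeta_real_def f_def by (simp add: powr_minus_divide)
  ultimately show ?thesis by simp
qed

lemma sum_upper_pairs_eq:
  fixes a :: "nat \<Rightarrow> 'a::comm_ring_1"
  shows "2 * (\<Sum>n=k..<M. a n * (\<Sum>m\<in>{n<..<M}. a m))
    = (\<Sum>n=k..<M. a n)\<^sup>2 - (\<Sum>n=k..<M. (a n)\<^sup>2)"
proof (induction M)
  case 0
  then show ?case by simp
next
  case (Suc M)
  show ?case
  proof (cases "k \<le> M")
    case True
    have "{n<..<Suc M} = insert M {n<..<M}" if "n < M" for n
      using that by auto
    moreover have "{M<..<Suc M} = {}"
      by auto
    ultimately have "(\<Sum>n=k..<Suc M. a n * (\<Sum>m\<in>{n<..<Suc M}. a m))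
        = (\<Sum>n=k..<M. a n * ((\<Sum>m\<in>{n<..<M}. a m) + a M))"
      using True by (auto simp: add.commute intro!: sum.cong)
    also have "\<dots> = (\<Sum>n=k..<M. a n * (\<Sum>m\<in>{n<..<M}. a m)) + (\<Sum>n=k..<M. a n) * a M"
      by (simp add: distrib_left sum.distrib sum_distrib_right)
    finally show ?thesis
      using True Suc.IH by (simp add: power2_eq_square algebra_simps)
  qed simp
qed

lemma sum_powr_initial_le:
  fixes q T :: real
  assumes q: "0 < q" "q < 1" and M: "2 \<le> M" "real (M - 1) \<le> T"
  shows "(\<Sum>n=1..<M. real n powr (-q)) \<le> (T powr (1 - q) - q) / (1 - q)"
proof -
  have "{1..<M} = {1..M - 1}"
    using M by auto
  then have "(\<Sum>n=1..<M. real n powr (-q)) \<le> 1 + (real (M - 1) powr (1 - q) - 1) / (1 - q)"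
    using sum_powr_neg_le[of q 1 "M - 1"] q M by simp
  also have "\<dots> \<le> 1 + (T powr (1 - q) - 1) / (1 - q)"
    using q M by (simp add: divide_right_mono powr_mono2)
  also have "\<dots> = (T powr (1 - q) - q) / (1 - q)"
    using q by (simp add: field_simps)
  finally show ?thesis .
qed

lemma sum_inverse_gaps_le:
  fixes T :: real
  assumes "n < M" "real (M - 1) \<le> T" "1 \<le> T"
  shows "(\<Sum>m\<in>{n<..<M}. 1 / (real m - real n)) \<le> 1 + ln T"
proof -
  have "(\<Sum>m\<in>{n<..<M}. 1 / (real m - real n)) = harm (M - n - 1)"
    unfolding harm_def inverse_eq_divide
    by (rule sum.reindex_bij_witness[of _ "\<lambda>k. k + n" "\<lambda>m. m - n"])
      (use assms in \<open>auto simp: of_nat_diff\<close>)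
  also have "\<dots> \<le> 1 + ln T"
  proof (cases "M - n - 1 = 0")
    case False
    then have "harm (M - n - 1) \<le> 1 + ln (real (M - n - 1))"
      by (intro harm_le_one_plus_ln) simp
    also have "\<dots> \<le> 1 + ln T"
      using False assms by (simp add: of_nat_diff)
    finally show ?thesis .
  qed (use assms in \<open>simp add: harm_def\<close>)
  finally show ?thesis .
qed

section \<open>The integral of a single pair\<close>

lemma has_integral_cos_after:
  fixes L c H T :: real
  assumes L: "L \<noteq> 0" and cT: "c < T" and HT: "H \<le> T"
  shows "((\<lambda>t. if c < t then cos (t * L) else 0) has_integral
    (sin (T * L) - sin (max H c * L)) / L) {H..T}"
proof -
  define b where "b = max H c"
  have Hb: "H \<le> b" and bT: "b \<le> T"
    using cT HT by (auto simp: b_def)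
  have "((\<lambda>t. if c < t then cos (t * L) else 0) has_integral 0) {H..b}"
    by (rule has_integral_spike_finite[of "{b}" _ _ "\<lambda>t. 0"]) (auto simp: b_def)
  moreover have "((\<lambda>t. if c < t then cos (t * L) else 0) has_integral sin (T * L) / L - sin (b * L) / L) {b..T}"
  proof (rule has_integral_spike_finite[of "{b}" _ _ "\<lambda>t. cos (t * L)"])
    show "((\<lambda>t. cos (t * L)) has_integral sin (T * L) / L - sin (b * L) / L) {b..T}"
    proof (rule fundamental_theorem_of_calculus[OF bT])
      fix t
      have "((\<lambda>t. sin (t * L) / L) has_real_derivative cos (t * L) * L / L) (at t within {b..T})"
        by (auto intro!: derivative_eq_intros)
      then show "((\<lambda>t. sin (t * L) / L) has_vector_derivative cos (t * L)) (at t within {b..T})"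
        using L by (simp add: has_real_derivative_iff_has_vector_derivative[symmetric])
    qed
  qed (auto simp: b_def)
  ultimately show ?thesis
    using has_integral_combine[OF Hb bT] by (fastforce simp: b_def diff_divide_distrib)
qed

lemma integral_cos_after_le:
  fixes L c H T :: real
  assumes "0 < L" "c < T" "H \<le> T"
  shows "(\<lambda>t. if c < t then cos (t * L) else 0) integrable_on {H..T}"
    and "integral {H..T} (\<lambda>t. if c < t then cos (t * L) else 0) \<le> 2 / L"
proof -
  note integral = has_integral_cos_after[OF _ assms(2,3), of L]
  show "(\<lambda>t. if c < t then cos (t * L) else 0) integrable_on {H..T}"
    using integral assms by blast
  have "sin (T * L) - sin (max H c * L) \<le> 2"
    using sin_le_one[of "T * L"] sin_ge_minus_one[of "max H c * L"] by linarith
  then show "integral {H..T} (\<lambda>t. if c < t then cos (t * L) else 0) \<le> 2 / L"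
    using integral_unique[OF integral] assms by (simp add: divide_right_mono)
qed

lemma pair_weight_le:
  fixes n m \<sigma> :: real
  assumes n: "0 < n" and nm: "n < m" and \<sigma>: "0 \<le> \<sigma>"
  shows "1 / (ln (m / n) * (n * m) powr \<sigma>)
    \<le> n powr (1 - 2 * \<sigma>) / (m - n) + n powr (-\<sigma>) * m powr (-\<sigma>)"
proof -
  have m: "0 < m" using n nm by simp
  define K where "K = (n * m) powr \<sigma>"
  have K: "0 < K" using n m by (simp add: K_def)
  have "ln (n / m) \<le> n / m - 1"
    using n m by (intro ln_le_minus_one) simp
  moreover have "ln (m / n) = - ln (n / m)" and "(m - n) / m = 1 - n / m"
    using n m by (simp_all add: ln_div diff_divide_distrib)
  ultimately have ln_ge: "(m - n) / m \<le> ln (m / n)"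
    by linarith
  have "0 < (m - n) / m"
    using nm m by simp
  then have "1 / (ln (m / n) * K) \<le> 1 / ((m - n) / m * K)"
    using ln_ge K by (intro divide_left_mono mult_right_mono mult_pos_pos) simp_all
  also have "\<dots> = n / K / (m - n) + 1 / K"
    using nm K by (simp add: field_simps)
  also have "\<dots> \<le> n powr (1 - 2 * \<sigma>) / (m - n) + n powr (-\<sigma>) * m powr (-\<sigma>)"
  proof -
    have "n powr \<sigma> \<le> m powr \<sigma>"
      by (rule powr_mono2) (use n nm \<sigma> in auto)
    then have "n powr \<sigma> * n powr \<sigma> \<le> n powr \<sigma> * m powr \<sigma>"
      by (rule mult_left_mono) simp
    moreover have "n powr (2 * \<sigma>) = n powr \<sigma> * n powr \<sigma>"
      unfolding mult_2 by (rule powr_add)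
    moreover have "K = n powr \<sigma> * m powr \<sigma>"
      unfolding K_def by (rule powr_mult)
    ultimately have "n powr (2 * \<sigma>) \<le> K"
      by simp
    then have "n / K \<le> n / n powr (2 * \<sigma>)"
      using n K by (intro divide_left_mono) auto
    also have "\<dots> = n powr (1 - 2 * \<sigma>)"
      using n by (simp add: powr_diff)
    finally have "n / K / (m - n) \<le> n powr (1 - 2 * \<sigma>) / (m - n)"
      using nm by (intro divide_right_mono) auto
    moreover have "1 / K = n powr (-\<sigma>) * m powr (-\<sigma>)"
      using n m by (simp add: K_def powr_mult powr_minus divide_inverse)
    ultimately show ?thesis
      by simp
  qed
  finally show ?thesis
    by (simp add: K_def)
qed

section \<open>Summing over the pairs\<close>

definition pair_weight_sum :: "real \<Rightarrow> real \<Rightarrow> real" where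
  "pair_weight_sum \<sigma> T = (\<Sum>n=1..<nat \<lceil>T\<rceil>. \<Sum>m\<in>{n<..<nat \<lceil>T\<rceil>}.
      1 / (ln (real m / real n) * (real n * real m) powr \<sigma>))"

lemma pairs_below_eq:
  "{(n::nat, m::nat). 1 \<le> n \<and> n < m \<and> real m < T} = Sigma {1..<nat \<lceil>T\<rceil>} (\<lambda>n. {n<..<nat \<lceil>T\<rceil>})"
proof -
  have "real m < T \<longleftrightarrow> m < nat \<lceil>T\<rceil>" for m :: nat
    by (simp only: zless_nat_eq_int_zless less_ceiling_iff of_int_of_nat_eq)
  then show ?thesis
    by (intro set_eqI) (simp add: split_paired_all, use less_trans in blast)
qed

lemma pair_weight_sum_nonneg: "0 \<le> pair_weight_sum \<sigma> T"
  unfolding pair_weight_sum_def by (intro sum_nonneg) auto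

lemma integral_Ssum_le:
  fixes \<sigma> H T :: real
  assumes HT: "H \<le> T"
  shows "integral {H..T} (\<lambda>t. Ssum \<sigma> t) \<le> 2 * pair_weight_sum \<sigma> T"
proof -
  define P where "P = Sigma {1..<nat \<lceil>T\<rceil>} (\<lambda>n. {n<..<nat \<lceil>T\<rceil>})"
  define L where "L p = ln (real (snd p) / real (fst p))" for p :: "nat \<times> nat"
  define K where "K p = (real (fst p) * real (snd p)) powr \<sigma>" for p :: "nat \<times> nat"
  define g where "g p t = (if real (snd p) < t then cos (t * L p) else 0) / K p" for p t
  have "finite P"
    unfolding P_def by auto
  have P: "1 \<le> fst p \<and> fst p < snd p \<and> real (snd p) < T" if "p \<in> P" for p
    using that unfolding P_def pairs_below_eq[symmetric] by auto
  have LK: "0 < L p" "0 < K p" if "p \<in> P" for p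
    using P[OF that] by (auto simp: L_def K_def)
  have "Ssum \<sigma> t = (\<Sum>p\<in>P. g p t)" if "t \<le> T" for t
  proof -
    have "{(n, m). 1 \<le> n \<and> n < m \<and> real m < t} = {p \<in> P. real (snd p) < t}"
      using that unfolding P_def pairs_below_eq[symmetric] by auto
    then show ?thesis
      unfolding Ssum_def g_def L_def K_def using \<open>finite P\<close>
      by (simp add: sum.inter_filter split_def) (intro sum.cong; simp)
  qed
  then have "integral {H..T} (\<lambda>t. Ssum \<sigma> t) = integral {H..T} (\<lambda>t. \<Sum>p\<in>P. g p t)"
    by (intro integral_cong) auto
  also have "\<dots> = (\<Sum>p\<in>P. integral {H..T} (g p))"
    using \<open>finite P\<close> P LK HT unfolding g_def
    by (intro integral_sum integrable_on_divide integral_cos_after_le(1)) auto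
  also have "\<dots> \<le> (\<Sum>p\<in>P. 2 * (1 / (L p * K p)))"
  proof (intro sum_mono)
    fix p assume p: "p \<in> P"
    have "integral {H..T} (g p) \<le> 2 / L p / K p"
      unfolding g_def integral_divide using P[OF p] LK[OF p] HT
      by (intro divide_right_mono integral_cos_after_le(2)) auto
    then show "integral {H..T} (g p) \<le> 2 * (1 / (L p * K p))"
      by simp
  qed
  also have "\<dots> = 2 * pair_weight_sum \<sigma> T"
    unfolding pair_weight_sum_def P_def L_def K_def sum_distrib_left[symmetric]
    by (simp add: sum.Sigma split_def)
  finally show ?thesis .
qed

lemma gap_pair_sum_le:
  fixes \<sigma> T :: real
  assumes \<sigma>: "1/2 < \<sigma>" "\<sigma> < 1" and M: "2 \<le> M" "real (M - 1) \<le> T"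
  shows "(\<Sum>n=1..<M. \<Sum>m\<in>{n<..<M}. real n powr (1 - 2*\<sigma>) / (real m - real n))
    \<le> (1 + ln T) * ((T powr (2 - 2*\<sigma>) - (2*\<sigma> - 1)) / (2 - 2*\<sigma>))"
proof -
  have T: "1 \<le> T"
    using M by (simp add: of_nat_diff)
  have "(\<Sum>n=1..<M. \<Sum>m\<in>{n<..<M}. real n powr (1 - 2*\<sigma>) / (real m - real n))
      = (\<Sum>n=1..<M. real n powr (1 - 2*\<sigma>) * (\<Sum>m\<in>{n<..<M}. 1 / (real m - real n)))"
    by (simp add: sum_distrib_left)
  also have "\<dots> \<le> (\<Sum>n=1..<M. real n powr (1 - 2*\<sigma>) * (1 + ln T))"
    using M T by (intro sum_mono mult_left_mono sum_inverse_gaps_le) auto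
  also have "\<dots> = (1 + ln T) * (\<Sum>n=1..<M. real n powr (-(2*\<sigma> - 1)))"
    by (simp add: sum_distrib_left mult.commute)
  also have "\<dots> \<le> (1 + ln T) * ((T powr (1 - (2*\<sigma> - 1)) - (2*\<sigma> - 1)) / (1 - (2*\<sigma> - 1)))"
    using \<sigma> M T by (intro mult_left_mono sum_powr_initial_le) auto
  finally show ?thesis
    by (simp add: algebra_simps)
qed

lemma cross_pair_sum_le:
  fixes \<sigma> T :: real
  assumes \<sigma>: "1/2 < \<sigma>" "\<sigma> < 1" and M: "2 \<le> M" "real (M - 1) \<le> T" "T \<le> real M"
  shows "(\<Sum>n=1..<M. \<Sum>m\<in>{n<..<M}. real n powr (-\<sigma>) * real m powr (-\<sigma>))
    \<le> (((T powr (1 - \<sigma>) - \<sigma>) / (1 - \<sigma>))\<^sup>2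
        - (zeta_real (2*\<sigma>) - T powr (-2*\<sigma>) - T powr (1 - 2*\<sigma>) / (2*\<sigma> - 1))) / 2"
proof -
  define A where "A = (\<Sum>n=1..<M. real n powr (-\<sigma>))"
  define B where "B = (\<Sum>n=1..<M. (real n powr (-\<sigma>))\<^sup>2)"
  have T: "0 < T"
    using M by (simp add: of_nat_diff)
  have "2 * (\<Sum>n=1..<M. \<Sum>m\<in>{n<..<M}. real n powr (-\<sigma>) * real m powr (-\<sigma>)) = A\<^sup>2 - B"
    unfolding A_def B_def sum_upper_pairs_eq[symmetric] by (simp add: sum_distrib_left)
  moreover have "A\<^sup>2 \<le> ((T powr (1 - \<sigma>) - \<sigma>) / (1 - \<sigma>))\<^sup>2"
    unfolding A_def using \<sigma> M by (intro power_mono sum_powr_initial_le sum_nonneg) auto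
  moreover have "zeta_real (2*\<sigma>) - T powr (-2*\<sigma>) - T powr (1 - 2*\<sigma>) / (2*\<sigma> - 1) \<le> B"
  proof -
    have "zeta_real (2*\<sigma>)
        \<le> B + real M powr (-(2*\<sigma>)) + real M powr (1 - 2*\<sigma>) / (2*\<sigma> - 1)"
      unfolding B_def using zeta_real_le[of "2*\<sigma>" M] \<sigma> M
      by (simp add: power2_eq_square powr_add[symmetric])
    moreover have "real M powr (-(2*\<sigma>)) \<le> T powr (-2*\<sigma>)"
      using M T \<sigma> by (simp add: powr_mono2')
    moreover have "real M powr (1 - 2*\<sigma>) / (2*\<sigma> - 1) \<le> T powr (1 - 2*\<sigma>) / (2*\<sigma> - 1)"
      using M T \<sigma> by (intro divide_right_mono powr_mono2') auto
    ultimately show ?thesis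
      by linarith
  qed
  ultimately have "2 * (\<Sum>n=1..<M. \<Sum>m\<in>{n<..<M}. real n powr (-\<sigma>) * real m powr (-\<sigma>))
    \<le> ((T powr (1 - \<sigma>) - \<sigma>) / (1 - \<sigma>))\<^sup>2
        - (zeta_real (2*\<sigma>) - T powr (-2*\<sigma>) - T powr (1 - 2*\<sigma>) / (2*\<sigma> - 1))"
    by linarith
  then show ?thesis
    by simp
qed

definition pair_weight_majorant :: "real \<Rightarrow> real \<Rightarrow> real" where
  "pair_weight_majorant \<sigma> T =
     (1 + ln T) * ((T powr (2 - 2*\<sigma>) - (2*\<sigma> - 1)) / (2 - 2*\<sigma>))
     + (((T powr (1 - \<sigma>) - \<sigma>) / (1 - \<sigma>))\<^sup>2
        - (zeta_real (2*\<sigma>) - T powr (-2*\<sigma>) - T powr (1 - 2*\<sigma>) / (2*\<sigma> - 1))) / 2"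

lemma pair_weight_sum_le_majorant:
  fixes \<sigma> T :: real
  assumes \<sigma>: "1/2 < \<sigma>" "\<sigma> < 1" and T: "2 \<le> T"
  shows "pair_weight_sum \<sigma> T \<le> pair_weight_majorant \<sigma> T"
proof -
  define M where "M = nat \<lceil>T\<rceil>"
  have M2: "2 \<le> M" and MT: "T \<le> real M"
    unfolding M_def using T by linarith+
  have "real (M - 1) \<le> T"
    unfolding M_def using T M2 by (simp add: of_nat_diff) linarith
  note M = M2 this MT
  have "pair_weight_sum \<sigma> T \<le> (\<Sum>n=1..<M. \<Sum>m\<in>{n<..<M}.
      real n powr (1 - 2*\<sigma>) / (real m - real n) + real n powr (-\<sigma>) * real m powr (-\<sigma>))"
    unfolding pair_weight_sum_def M_def[symmetric] using \<sigma>
    by (intro sum_mono pair_weight_le) auto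
  also have "\<dots> = (\<Sum>n=1..<M. \<Sum>m\<in>{n<..<M}. real n powr (1 - 2*\<sigma>) / (real m - real n))
      + (\<Sum>n=1..<M. \<Sum>m\<in>{n<..<M}. real n powr (-\<sigma>) * real m powr (-\<sigma>))"
    by (simp add: sum.distrib)
  also have "\<dots> \<le> pair_weight_majorant \<sigma> T"
    unfolding pair_weight_majorant_def using \<sigma> M
    by (intro add_mono gap_pair_sum_le cross_pair_sum_le) auto
  finally show ?thesis .
qed

section \<open>The profile of eps1\<close>

definition eps1_profile :: "real \<Rightarrow> real \<Rightarrow> real" where
  "eps1_profile \<sigma> x =
     ln x * x powr (1 - 2*\<sigma>) / (2 * (1 - \<sigma>))
     - (2*\<sigma> - 1) * ln x / (2 * (1 - \<sigma>) * x)
     + max 0 ((1 - 3*\<sigma> + 3*\<sigma>\<^sup>2) / (2 * (1 - \<sigma>)\<^sup>2) - zeta_real (2*\<sigma>) / 2) / x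
     + (2 - \<sigma>) * x powr (1 - 2*\<sigma>) / (2 * (1 - \<sigma>)\<^sup>2)
     - \<sigma> * x powr (-\<sigma>) / (1 - \<sigma>)\<^sup>2
     + x powr (-2*\<sigma>) / (2 * (2*\<sigma> - 1))
     + x powr (-2*\<sigma> - 1) / 2"

lemma eps1_eq_profile: "eps1 \<sigma> H = 4 * H0 / (H0 - H) * eps1_profile \<sigma> H0"
  unfolding eps1_def eps1_profile_def by simp

lemma pair_weight_majorant_identity:
  fixes \<sigma> T Y L z :: real
  assumes "\<sigma> \<noteq> 1" "2*\<sigma> - 1 \<noteq> 0" "T \<noteq> 0"
  shows "(1 + L) * ((Y\<^sup>2 - (2*\<sigma> - 1)) / (2 - 2*\<sigma>))
      + (((Y - \<sigma>) / (1 - \<sigma>))\<^sup>2 - (z - Y\<^sup>2/T\<^sup>2 - (Y\<^sup>2/T) / (2*\<sigma> - 1))) / 2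
    = T * (L * (Y\<^sup>2/T) / (2 * (1 - \<sigma>)) - (2*\<sigma> - 1) * L / (2 * (1 - \<sigma>) * T)
      + ((1 - 3*\<sigma> + 3*\<sigma>\<^sup>2) / (2 * (1 - \<sigma>)\<^sup>2) - z/2) / T
      + (2 - \<sigma>) * (Y\<^sup>2/T) / (2 * (1 - \<sigma>)\<^sup>2) - \<sigma> * (Y/T) / (1 - \<sigma>)\<^sup>2
      + (Y\<^sup>2/T\<^sup>2) / (2 * (2*\<sigma> - 1)) + (Y\<^sup>2/T^3) / 2)"
proof -
  define a where "a = 1 - \<sigma>"
  have "a \<noteq> 0" "1 - 2*a \<noteq> 0" and \<sigma>: "\<sigma> = 1 - a"
    using assms by (auto simp: a_def)
  then show ?thesis
    unfolding \<sigma> using assms(3) by (simp add: field_simps power2_eq_square power3_eq_cube)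
qed

lemma pair_weight_majorant_le_profile:
  fixes \<sigma> T :: real
  assumes \<sigma>: "1/2 < \<sigma>" "\<sigma> < 1" and T: "0 < T"
  shows "pair_weight_majorant \<sigma> T \<le> T * eps1_profile \<sigma> T"
proof -
  define Y where "Y = T powr (1 - \<sigma>)"
  define C where "C = (1 - 3*\<sigma> + 3*\<sigma>\<^sup>2) / (2 * (1 - \<sigma>)\<^sup>2) - zeta_real (2*\<sigma>) / 2"
  have pow: "T powr e = Y ^ k / T ^ j" if "e = real k * (1 - \<sigma>) - real j" for e k j
  proof -
    have "T powr e = T powr (real k * (1 - \<sigma>)) / T powr real j"
      unfolding that by (rule powr_diff)
    then show ?thesis
      unfolding Y_def using T by (simp add: powr_power powr_realpow)
  qed
  have Y2: "T powr (2 - 2*\<sigma>) = Y\<^sup>2"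
    using pow[of _ 2 0] by (simp add: algebra_simps)
  have powers: "T powr (1 - 2*\<sigma>) = Y\<^sup>2 / T" "T powr (-\<sigma>) = Y / T"
    "T powr (-2*\<sigma>) = Y\<^sup>2 / T\<^sup>2" "T powr (-2*\<sigma> - 1) = Y\<^sup>2 / T^3"
    using pow[of _ 2 1] pow[of _ 1 1] pow[of _ 2 2] pow[of _ 2 3] by (simp_all add: algebra_simps)
  have "pair_weight_majorant \<sigma> T = T * (ln T * (Y\<^sup>2/T) / (2 * (1 - \<sigma>))
      - (2*\<sigma> - 1) * ln T / (2 * (1 - \<sigma>) * T) + C / T
      + (2 - \<sigma>) * (Y\<^sup>2/T) / (2 * (1 - \<sigma>)\<^sup>2) - \<sigma> * (Y/T) / (1 - \<sigma>)\<^sup>2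
      + (Y\<^sup>2/T\<^sup>2) / (2 * (2*\<sigma> - 1)) + (Y\<^sup>2/T^3) / 2)"
    unfolding pair_weight_majorant_def Y2 powers Y_def[symmetric] C_def
    using \<sigma> T by (intro pair_weight_majorant_identity) auto
  also have "\<dots> \<le> T * eps1_profile \<sigma> T"
    unfolding eps1_profile_def powers C_def[symmetric] using T
    by (intro mult_left_mono add_mono diff_mono divide_right_mono order_refl) auto
  finally show ?thesis .
qed

lemma integral_Ssum_le_profile:
  fixes \<sigma> H T :: real
  assumes \<sigma>: "1/2 < \<sigma>" "\<sigma> < 1" and T: "2 \<le> T" "H \<le> T"
  shows "integral {H..T} (\<lambda>t. Ssum \<sigma> t) \<le> 2 * T * eps1_profile \<sigma> T"
    and "0 \<le> eps1_profile \<sigma> T"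
proof -
  have weights: "pair_weight_sum \<sigma> T \<le> T * eps1_profile \<sigma> T"
    using \<sigma> T by (intro order_trans[OF pair_weight_sum_le_majorant pair_weight_majorant_le_profile]) auto
  then show "integral {H..T} (\<lambda>t. Ssum \<sigma> t) \<le> 2 * T * eps1_profile \<sigma> T"
    using integral_Ssum_le[OF T(2), of \<sigma>] by linarith
  have "0 \<le> T * eps1_profile \<sigma> T"
    using weights pair_weight_sum_nonneg[of \<sigma> T] by linarith
  then show "0 \<le> eps1_profile \<sigma> T"
    using T by (auto simp: zero_le_mult_iff)
qed

section \<open>Monotonicity of the profile\<close>

lemma exp_double_le:
  fixes a y z :: real
  assumes a: "exp a \<le> y" and y: "y * y \<le> z"
  shows "exp (2 * a) \<le> z"
proof -
  have "exp (2 * a) = exp a * exp a"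
    by (simp only: mult_2 exp_add)
  also have "\<dots> \<le> y * y"
    using a by (intro mult_mono) (auto intro: order_trans[OF exp_ge_zero])
  finally show ?thesis
    using y by linarith
qed

lemma ln_H0_ge: "24.14 \<le> ln H0"
proof -
  \<comment> \<open>Upper bounds for exp (24.14 / 2^k), k = 17, ..., 0, by repeated squaring and rounding up.\<close>
  have "exp (1207/6553600::real) \<le> 1 + 1207/6553600 + (1207/6553600)\<^sup>2"
    by (rule exp_bound) simp_all
  also have "\<dots> \<le> 1000184207504/1000000000000"
    by (simp add: power2_eq_square)
  finally have "exp (1207/6553600::real) \<le> 1000184207504/1000000000000" .
  then have "exp (1207/3276800::real) \<le> 1000368448941/1000000000000"
    by (rule exp_double_le[where a = "1207/6553600", simplified]) simp
  then have "exp (1207/1638400::real) \<le> 1000737033637/1000000000000"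
    by (rule exp_double_le[where a = "1207/3276800", simplified]) simp
  then have "exp (1207/819200::real) \<le> 1001474610493/1000000000000"
    by (rule exp_double_le[where a = "1207/1638400", simplified]) simp
  then have "exp (1207/409600::real) \<le> 1002951395463/1000000000000"
    by (rule exp_double_le[where a = "1207/819200", simplified]) simp
  then have "exp (1207/204800::real) \<le> 1005911501662/1000000000000"
    by (rule exp_double_le[where a = "1207/409600", simplified]) simp
  then have "exp (1207/102400::real) \<le> 1011857949176/1000000000000"
    by (rule exp_double_le[where a = "1207/204800", simplified]) simp
  then have "exp (1207/51200::real) \<le> 1023856509311/1000000000000"
    by (rule exp_double_le[where a = "1207/102400", simplified]) simp
  then have "exp (1207/25600::real) \<le> 1048282151659/1000000000000"
    by (rule exp_double_le[where a = "1207/51200", simplified]) simp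
  then have "exp (1207/12800::real) \<le> 1098895469487/1000000000000"
    by (rule exp_double_le[where a = "1207/25600", simplified]) simp
  then have "exp (1207/6400::real) \<le> 1207571252860/1000000000000"
    by (rule exp_double_le[where a = "1207/12800", simplified]) simp
  then have "exp (1207/3200::real) \<le> 1458228330734/1000000000000"
    by (rule exp_double_le[where a = "1207/6400", simplified]) simp
  then have "exp (1207/1600::real) \<le> 2126429864556/1000000000000"
    by (rule exp_double_le[where a = "1207/3200", simplified]) simp
  then have "exp (1207/800::real) \<le> 4521703968876/1000000000000"
    by (rule exp_double_le[where a = "1207/1600", simplified]) simp
  then have "exp (1207/400::real) \<le> 20445806782149/1000000000000"
    by (rule exp_double_le[where a = "1207/800", simplified]) simp
  then have "exp (1207/200::real) \<le> 418031014972971/1000000000000"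
    by (rule exp_double_le[where a = "1207/400", simplified]) simp
  then have "exp (1207/100::real) \<le> 174749929479332305/1000000000000"
    by (rule exp_double_le[where a = "1207/200", simplified]) simp
  then have "exp (1207/50::real) \<le> 30537537853031613762073/1000000000000"
    by (rule exp_double_le[where a = "1207/100", simplified]) simp
  also have "\<dots> \<le> H0"
    by (simp add: H0_def)
  finally have "exp (1207/50) \<le> H0" .
  moreover have "0 < H0"
    by (simp add: H0_def)
  ultimately have "1207/50 \<le> ln H0"
    using ln_ge_iff by blast
  then show ?thesis
    by simp
qed

lemma log_terms_key_ineq:
  fixes \<sigma> x :: real
  assumes \<sigma>: "0.5208 < \<sigma>" "\<sigma> < 0.9723" and x: "24.14 \<le> x"
  shows "1 \<le> (x + (1 - \<sigma>) * x\<^sup>2) * ((2*\<sigma> - 1) * x - 1)"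
proof -
  have sx: "0.0416 * 24.14 \<le> (2*\<sigma> - 1) * x"
    using \<sigma> x by (intro mult_mono) auto
  have ax: "0 \<le> (1 - \<sigma>) * x\<^sup>2"
    using \<sigma> by simp
  show ?thesis
  proof (cases "1/24 \<le> (2*\<sigma> - 1) * x - 1")
    case True
    have "x * (1/24) \<le> (x + (1 - \<sigma>) * x\<^sup>2) * ((2*\<sigma> - 1) * x - 1)"
      using True ax x by (intro mult_mono) auto
    then show ?thesis
      using x by simp
  next
    case False
    have "(2*\<sigma> - 1) * 24.14 \<le> (2*\<sigma> - 1) * x"
      using \<sigma> x by (intro mult_left_mono) auto
    then have "0.478 \<le> 1 - \<sigma>"
      using False by simp
    moreover have "24.14\<^sup>2 \<le> x\<^sup>2"
      using x by (intro power_mono) auto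
    ultimately have "0.478 * 24.14\<^sup>2 \<le> (1 - \<sigma>) * x\<^sup>2"
      by (intro mult_mono) auto
    then have "(0.478 * 24.14\<^sup>2) * (0.0416 * 24.14 - 1) \<le> ((1 - \<sigma>) * x\<^sup>2) * ((2*\<sigma> - 1) * x - 1)"
      by (rule mult_mono) (use sx ax in auto)
    also have "\<dots> \<le> (x + (1 - \<sigma>) * x\<^sup>2) * ((2*\<sigma> - 1) * x - 1)"
      using sx x by (intro mult_right_mono) auto
    finally show ?thesis
      by (simp add: power2_eq_square)
  qed
qed

lemma log_terms_deriv_nonpos:
  fixes \<sigma> x :: real
  assumes \<sigma>: "0.5208 < \<sigma>" "\<sigma> < 0.9723" and x: "24.14 \<le> x"
  shows "exp (-(2*\<sigma> - 1) * x) * (1 - (2*\<sigma> - 1) * x) + (2*\<sigma> - 1) * (x - 1) * exp (-x) \<le> 0"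
proof -
  define s where "s = 2*\<sigma> - 1"
  define a where "a = 1 - \<sigma>"
  have "0.0416 * 24.14 \<le> s * x"
    using \<sigma> x unfolding s_def by (intro mult_mono) auto
  then have sx: "1 \<le> s * x"
    by simp
  have key: "1 \<le> (x + a * x\<^sup>2) * (s * x - 1)"
    unfolding a_def s_def by (rule log_terms_key_ineq[OF \<sigma> x])
  \<comment> \<open>The quadratic Taylor bound for exp (2 a x) suffices, thanks to the cubic inequality above.\<close>
  have "1 + 2*a*x + (2*a*x)\<^sup>2/2 \<le> exp (2*a*x)"
    using \<sigma> x unfolding a_def by (intro exp_lower_Taylor_quadratic) simp
  then have "(1 + 2*a*x + (2*a*x)\<^sup>2/2) * (s*x - 1) \<le> exp (2*a*x) * (s*x - 1)"
    using sx by (intro mult_right_mono) auto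
  moreover have "(1 + 2*a*x + (2*a*x)\<^sup>2/2) * (s*x - 1) = (s*x - 1) + 2*a*((x + a*x\<^sup>2) * (s*x - 1))"
    by (simp add: power2_eq_square algebra_simps)
  moreover have "2*a \<le> 2*a*((x + a*x\<^sup>2) * (s*x - 1))"
    using key \<sigma> unfolding a_def by simp
  ultimately have main: "s * (x - 1) \<le> exp (2*a*x) * (s*x - 1)"
    unfolding s_def a_def by (simp add: algebra_simps)
  have "exp (-s*x) = exp (2*a*x) * exp (-x)"
    unfolding s_def a_def by (simp add: exp_add[symmetric] algebra_simps)
  then have "exp (-s*x) * (1 - s*x) + s * (x - 1) * exp (-x) = exp (-x) * (s*(x - 1) - exp (2*a*x) * (s*x - 1))"
    by (simp add: algebra_simps)
  also have "\<dots> \<le> 0"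
    using main by (intro mult_nonneg_nonpos) auto
  finally show ?thesis
    unfolding s_def .
qed

lemma log_terms_antimono:
  fixes \<sigma> x y :: real
  assumes \<sigma>: "0.5208 < \<sigma>" "\<sigma> < 0.9723" and x: "24.14 \<le> x" "x \<le> y"
  shows "y * exp (-(2*\<sigma> - 1) * y) - (2*\<sigma> - 1) * y * exp (-y)
    \<le> x * exp (-(2*\<sigma> - 1) * x) - (2*\<sigma> - 1) * x * exp (-x)"
proof (rule DERIV_nonpos_imp_nonincreasing[OF x(2)])
  fix t assume t: "x \<le> t" "t \<le> y"
  have "((\<lambda>t. t * exp (-(2*\<sigma> - 1) * t) - (2*\<sigma> - 1) * t * exp (-t)) has_real_derivative
      exp (-(2*\<sigma> - 1) * t) * (1 - (2*\<sigma> - 1) * t) + (2*\<sigma> - 1) * (t - 1) * exp (-t)) (at t)"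
    by (rule derivative_eq_intros refl | simp add: algebra_simps)+
  moreover have "exp (-(2*\<sigma> - 1) * t) * (1 - (2*\<sigma> - 1) * t) + (2*\<sigma> - 1) * (t - 1) * exp (-t) \<le> 0"
    using x t by (intro log_terms_deriv_nonpos[OF \<sigma>]) simp
  ultimately show "\<exists>d. ((\<lambda>t. t * exp (-(2*\<sigma> - 1) * t) - (2*\<sigma> - 1) * t * exp (-t))
      has_real_derivative d) (at t) \<and> d \<le> 0"
    by blast
qed

lemma power_terms_deriv_nonpos:
  fixes \<sigma> x :: real
  assumes \<sigma>: "0.5208 < \<sigma>" "\<sigma> < 0.9723" and x: "24.14 \<le> x"
  shows "-(2 - \<sigma>) * (2*\<sigma> - 1) * exp (-(2*\<sigma> - 1) * x) / 2 + \<sigma>\<^sup>2 * exp (-\<sigma> * x) \<le> 0"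
proof -
  define u where "u = 0.9723 - \<sigma>"
  define v where "v = \<sigma> - 0.5208"
  have u: "0 \<le> u" and v: "0 \<le> v"
    using \<sigma> by (auto simp: u_def v_def)
  have exp_ge: "1.9502 \<le> exp (0.0277 * 24.14 :: real)"
  proof -
    define y :: real where "y = 0.0277 * 24.14 / 8"
    have "(1 + y + y\<^sup>2/2) ^ 8 \<le> exp y ^ 8"
      using exp_lower_Taylor_quadratic[of y] by (intro power_mono) (auto simp: y_def)
    moreover have "exp y ^ 8 = exp (0.0277 * 24.14)"
      unfolding y_def by (subst exp_of_nat_mult[symmetric]) simp
    moreover have "1.9502 \<le> (1 + y + y\<^sup>2/2) ^ 8"
      unfolding y_def by (simp add: eval_nat_numeral)
    ultimately show ?thesis
      by simp
  qed
  have "1.9502 * (1 + u * 24.14) \<le> exp (0.0277 * 24.14) * exp (u * 24.14)"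
    using exp_ge u by (intro mult_mono exp_ge_add_one_self) auto
  also have "\<dots> = exp ((1 - \<sigma>) * 24.14)"
    unfolding u_def by (simp add: exp_add[symmetric] algebra_simps)
  also have "\<dots> \<le> exp ((1 - \<sigma>) * x)"
    using \<sigma> x by (intro exp_mono mult_left_mono) auto
  finally have exp_lower: "1.9502 * (1 + u * 24.14) \<le> exp ((1 - \<sigma>) * x)" .
  have "(2 - \<sigma>) * (2*\<sigma> - 1) * 1.9502 * (1 + u * 24.14) / 2 - \<sigma>\<^sup>2
      = 613035521/500000000000 + 28228836494707/537500000000 * (u * v)
        + 36380360941/16796875000 * (u * u) + 11769457/250000 * (u * u * v)"
    unfolding u_def v_def power2_eq_square by algebra
  moreover have "0 \<le> u * v" "0 \<le> u * u" "0 \<le> u * u * v"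
    using u v by auto
  ultimately have "\<sigma>\<^sup>2 \<le> (2 - \<sigma>) * (2*\<sigma> - 1) * 1.9502 * (1 + u * 24.14) / 2"
    by linarith
  also have "\<dots> = (2 - \<sigma>) * (2*\<sigma> - 1) / 2 * (1.9502 * (1 + u * 24.14))"
    by simp
  also have "\<dots> \<le> (2 - \<sigma>) * (2*\<sigma> - 1) / 2 * exp ((1 - \<sigma>) * x)"
    using exp_lower \<sigma> by (intro mult_left_mono) auto
  finally have main: "\<sigma>\<^sup>2 \<le> (2 - \<sigma>) * (2*\<sigma> - 1) / 2 * exp ((1 - \<sigma>) * x)" .
  have "exp (-(2*\<sigma> - 1) * x) = exp ((1 - \<sigma>) * x) * exp (-\<sigma> * x)"
    by (simp add: exp_add[symmetric] algebra_simps)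
  then have "-(2 - \<sigma>) * (2*\<sigma> - 1) * exp (-(2*\<sigma> - 1) * x) / 2 + \<sigma>\<^sup>2 * exp (-\<sigma> * x)
      = exp (-\<sigma> * x) * (\<sigma>\<^sup>2 - (2 - \<sigma>) * (2*\<sigma> - 1) / 2 * exp ((1 - \<sigma>) * x))"
    by (simp add: field_simps)
  also have "\<dots> \<le> 0"
    using main by (intro mult_nonneg_nonpos) auto
  finally show ?thesis .
qed

lemma power_terms_antimono:
  fixes \<sigma> x y :: real
  assumes \<sigma>: "0.5208 < \<sigma>" "\<sigma> < 0.9723" and x: "24.14 \<le> x" "x \<le> y"
  shows "(2 - \<sigma>) * exp (-(2*\<sigma> - 1) * y) / 2 - \<sigma> * exp (-\<sigma> * y)
    \<le> (2 - \<sigma>) * exp (-(2*\<sigma> - 1) * x) / 2 - \<sigma> * exp (-\<sigma> * x)"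
proof (rule DERIV_nonpos_imp_nonincreasing[OF x(2)])
  fix t assume t: "x \<le> t" "t \<le> y"
  have "((\<lambda>t. (2 - \<sigma>) * exp (-(2*\<sigma> - 1) * t) / 2 - \<sigma> * exp (-\<sigma> * t)) has_real_derivative
      -(2 - \<sigma>) * (2*\<sigma> - 1) * exp (-(2*\<sigma> - 1) * t) / 2 + \<sigma>\<^sup>2 * exp (-\<sigma> * t)) (at t)"
    by (rule derivative_eq_intros refl | simp add: field_simps power2_eq_square)+
  moreover have "-(2 - \<sigma>) * (2*\<sigma> - 1) * exp (-(2*\<sigma> - 1) * t) / 2 + \<sigma>\<^sup>2 * exp (-\<sigma> * t) \<le> 0"
    using x t by (intro power_terms_deriv_nonpos[OF \<sigma>]) simp
  ultimately show "\<exists>d. ((\<lambda>t. (2 - \<sigma>) * exp (-(2*\<sigma> - 1) * t) / 2 - \<sigma> * exp (-\<sigma> * t))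
      has_real_derivative d) (at t) \<and> d \<le> 0"
    by blast
qed

lemma eps1_profile_antimono:
  fixes \<sigma> x y :: real
  assumes \<sigma>: "0.5208 < \<sigma>" "\<sigma> < 0.9723" and x0: "0 < x" and x: "24.14 \<le> ln x" "x \<le> y"
  shows "eps1_profile \<sigma> y \<le> eps1_profile \<sigma> x"
  \<comment> \<open>0 < x is not implied by 24.14 \<le> ln x: ln is unspecified on nonpositive reals.\<close>
proof -
  define C where "C = max 0 ((1 - 3*\<sigma> + 3*\<sigma>\<^sup>2) / (2 * (1 - \<sigma>)\<^sup>2) - zeta_real (2*\<sigma>) / 2)"
  define lt where "lt z = ln z * z powr (1 - 2*\<sigma>) - (2*\<sigma> - 1) * ln z / z" for z
  define pt where "pt z = (2 - \<sigma>) * z powr (1 - 2*\<sigma>) / 2 - \<sigma> * z powr (-\<sigma>)" for z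
  have profile: "eps1_profile \<sigma> z = lt z / (2 * (1 - \<sigma>)) + pt z / (1 - \<sigma>)\<^sup>2 + C / z
      + z powr (-2*\<sigma>) / (2 * (2*\<sigma> - 1)) + z powr (-2*\<sigma> - 1) / 2" for z
    unfolding eps1_profile_def lt_def pt_def C_def
    by (simp add: diff_divide_distrib divide_divide_eq_left mult_ac)
  have lt_exp: "lt z = ln z * exp (-(2*\<sigma> - 1) * ln z) - (2*\<sigma> - 1) * ln z * exp (- ln z)"
    and pt_exp: "pt z = (2 - \<sigma>) * exp (-(2*\<sigma> - 1) * ln z) / 2 - \<sigma> * exp (-\<sigma> * ln z)"
    if "0 < z" for z
  proof -
    have "z powr a = exp (a * ln z)" for a
      using that by (simp add: powr_def)
    moreover have "exp (- ln z) = 1 / z"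
      using that by (simp add: exp_minus inverse_eq_divide)
    ultimately show "lt z = ln z * exp (-(2*\<sigma> - 1) * ln z) - (2*\<sigma> - 1) * ln z * exp (- ln z)"
      and "pt z = (2 - \<sigma>) * exp (-(2*\<sigma> - 1) * ln z) / 2 - \<sigma> * exp (-\<sigma> * ln z)"
      unfolding lt_def pt_def by simp_all
  qed
  have y0: "0 < y"
    using x0 x by simp
  have lnxy: "ln x \<le> ln y"
    using x0 y0 x by simp
  have "lt y \<le> lt x"
    unfolding lt_exp[OF y0] lt_exp[OF x0] by (rule log_terms_antimono[OF \<sigma> x(1) lnxy])
  moreover have "pt y \<le> pt x"
    unfolding pt_exp[OF y0] pt_exp[OF x0] by (rule power_terms_antimono[OF \<sigma> x(1) lnxy])
  moreover have "C / y \<le> C / x" "y powr (-2*\<sigma>) \<le> x powr (-2*\<sigma>)" "y powr (-2*\<sigma> - 1) \<le> x powr (-2*\<sigma> - 1)"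
    using x0 x \<sigma> by (auto simp: C_def intro!: divide_left_mono powr_mono2')
  ultimately show ?thesis
    unfolding profile using \<sigma> by (intro add_mono divide_right_mono) auto
qed

theorem mainTheorem8:
  fixes \<sigma>0 H T :: real
  assumes "0.5208 < \<sigma>0" and "\<sigma>0 < 0.9723"
    and "10 ^ 3 \<le> H" and "H < H0" and "H0 \<le> T"
  shows "2 / (T - H) * integral {H..T} (\<lambda>t. Ssum \<sigma>0 t) \<le> eps1 \<sigma>0 H"
proof -
  have H0: "24.14 \<le> ln H0" "2 \<le> H0"
    using ln_H0_ge by (auto simp: H0_def)
  have \<sigma>: "1/2 < \<sigma>0" "\<sigma>0 < 1"
    using assms(1,2) by auto
  note profile = integral_Ssum_le_profile[OF \<sigma>, of T H]
  have "T * (H0 - H) \<le> H0 * (T - H)"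
    using assms by (simp add: algebra_simps mult_right_mono)
  then have ratio: "T / (T - H) \<le> H0 / (H0 - H)"
    using assms by (simp add: divide_simps)
  have "2 / (T - H) * integral {H..T} (\<lambda>t. Ssum \<sigma>0 t) \<le> 2 / (T - H) * (2 * T * eps1_profile \<sigma>0 T)"
    using profile assms H0 by (intro mult_left_mono) auto
  also have "\<dots> = 4 * (T / (T - H)) * eps1_profile \<sigma>0 T"
    by simp
  also have "\<dots> \<le> 4 * (H0 / (H0 - H)) * eps1_profile \<sigma>0 T"
    using ratio profile assms H0 by (intro mult_right_mono) auto
  also have "\<dots> \<le> 4 * (H0 / (H0 - H)) * eps1_profile \<sigma>0 H0"
    using assms H0 by (intro mult_left_mono eps1_profile_antimono) auto
  finally show ?thesis
    by (simp add: eps1_eq_profile)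
qed

end
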